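(* Let $A = [0,\mathfrak{c})$, $B = [0,\omega)$, $Y = A \times B$, $p \notin Y$, and $X = Y \cup A \cup \{p\}$, topologized so that: every point of $Y$ is isolated; each $\alpha \in A$ has basic neighborhoods $\{\alpha\} \cup \{\langle \alpha, m\rangle : m > n\}$, $n \in \omega$; and $p$ has basic neighborhoods $\{p\} \cup \{\langle\alpha,n\rangle : \alpha \in A\setminus F,\ n \in \omega\}$ for countable $F \subset A$. Then $X$ is a Hausdorff star Hurewicz space which is not set star Hurewicz.
   Context: $\mathfrak{c}$ denotes the cardinality of the continuum. For a subset $S$ of a space $X$ and a collection $\mathcal{U}$ of subsets of $X$, ${\rm St}(S,\mathcal{U}) = \bigcup\{U \in \mathcal{U}: U \cap S \neq \emptyset\}$. $X$ is star Hurewicz if for each sequence $(\mathcal{U}_n: n\in\mathbb{N})$ of open covers of $X$ there are finite $\mathcal{V}_n \subset \mathcal{U}_n$ such that each $x\in X$ lies in ${\rm St}(\bigcup\mathcal{V}_n,\mathcal{U}_n)$ for all but finitely many $n$. $X$ is set star Hurewicz if for each nonempty $S \subset X$ and each sequence $(\mathcal{U}_n: n\in\mathbb{N})$ of collections of sets open in $X$ with $\overline{S} \subset \bigcup\mathcal{U}_n$ for all $n$, there are finite $\mathcal{V}_n \subset \mathcal{U}_n$ such that each $x \in S$ lies in ${\rm St}(\bigcup\mathcal{V}_n,\mathcal{U}_n)$ for all but finitely many $n$. *)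

theory Defs
  imports "HOL-Analysis.Analysis"
begin

definition St :: "'a set \<Rightarrow> 'a set set \<Rightarrow> 'a set" where
  "St S \<U> = \<Union>{U \<in> \<U>. U \<inter> S \<noteq> {}}"

definition star_Hurewicz :: "'a topology \<Rightarrow> bool" where
  "star_Hurewicz X \<longleftrightarrow>
     (\<forall>\<U> :: nat \<Rightarrow> 'a set set.
        (\<forall>n. (\<forall>U\<in>\<U> n. openin X U) \<and> topspace X \<subseteq> \<Union>(\<U> n)) \<longrightarrow>
        (\<exists>\<V> :: nat \<Rightarrow> 'a set set. (\<forall>n. finite (\<V> n) \<and> \<V> n \<subseteq> \<U> n) \<and>
           (\<forall>x\<in>topspace X. \<forall>\<^sub>F n in sequentially. x \<in> St (\<Union>(\<V> n)) (\<U> n))))"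

definition set_star_Hurewicz :: "'a topology \<Rightarrow> bool" where
  "set_star_Hurewicz X \<longleftrightarrow>
     (\<forall>S \<U>. S \<noteq> {} \<and> S \<subseteq> topspace X \<and>
        (\<forall>n::nat. (\<forall>U\<in>\<U> n. openin X U) \<and> X closure_of S \<subseteq> \<Union>(\<U> n)) \<longrightarrow>
        (\<exists>\<V> :: nat \<Rightarrow> 'a set set. (\<forall>n. finite (\<V> n) \<and> \<V> n \<subseteq> \<U> n) \<and>
           (\<forall>x\<in>S. \<forall>\<^sub>F n in sequentially. x \<in> St (\<Union>(\<V> n)) (\<U> n))))"

text \<open>The index set A = [0,\<mathfrak>c) is represented by the type real (a set of cardinality \<mathfrak>c);
  the topology does not use any order on A.\<close>
datatype pt = Ypt real nat | Apt real | Ppt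

definition nbhdA :: "real \<Rightarrow> nat \<Rightarrow> pt set" where
  "nbhdA \<alpha> n = {Apt \<alpha>} \<union> {Ypt \<alpha> m | m. m > n}"

definition nbhdP :: "real set \<Rightarrow> pt set" where
  "nbhdP F = {Ppt} \<union> {Ypt \<alpha> n | \<alpha> n. \<alpha> \<notin> F}"

definition Xbasis :: "pt set set" where
  "Xbasis = {{Ypt \<alpha> n} | \<alpha> n. True} \<union> {nbhdA \<alpha> n | \<alpha> n. True}
            \<union> {nbhdP F | F. countable F}"

definition Xtop :: "pt topology" where
  "Xtop = topology_generated_by Xbasis"

end

theory Submission
  imports Defs
begin

(*
  Let U_n be the member of the n-th cover that contains p; it contains a basic neighbourhood
  nbhdP F_n with F_n countable. Outside the countably many points indexed by G = UN n. F_n,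
  every point of Y lies in U_n and every point alpha of A has only neighbourhoods meeting U_n,
  so the single set U_n handles them all; the countable rest is exhausted by finite initial
  pieces of an enumeration. On the other hand A is closed and
  covered by the pairwise disjoint open sets nbhdA alpha 0, and the star of finitely many of
  these is just their union, so a sequence of such stars reaches only countably many points of
  the uncountable set A.
*)

lemma StI: "W \<in> \<U> \<Longrightarrow> x \<in> W \<Longrightarrow> W \<inter> A \<noteq> {} \<Longrightarrow> x \<in> St A \<U>"
  unfolding St_def by blast

lemma St_mono: "A \<subseteq> B \<Longrightarrow> St A \<U> \<subseteq> St B \<U>"
  unfolding St_def by blast

lemma St_Union_subset_self:
  assumes "pairwise disjnt \<U>" "\<V> \<subseteq> \<U>"
  shows "St (\<Union>\<V>) \<U> \<subseteq> \<Union>\<V>"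
  using assms unfolding St_def pairwise_def disjnt_def by blast

lemma eventually_to_nat_on_le:
  assumes "countable D" "x \<in> D"
  shows "\<forall>\<^sub>F n in sequentially. x \<in> {y \<in> D. to_nat_on D y \<le> n}"
  using assms eventually_ge_at_top[of "to_nat_on D x"] by (auto elim: eventually_mono)

lemma finite_to_nat_on_le:
  assumes "countable D"
  shows "finite {y \<in> D. to_nat_on D y \<le> n}"
  by (rule inj_on_finite[of "to_nat_on D" _ "{..n}"])
     (auto intro: inj_on_subset[OF inj_on_to_nat_on[OF assms]])

lemma star_Hurewicz_countable_exceptions:
  assumes "\<And>\<U>. \<forall>n. (\<forall>U\<in>\<U> n. openin X U) \<and> topspace X \<subseteq> \<Union>(\<U> n) \<Longrightarrow>
    \<exists>D \<W>. countable D \<and> (\<forall>n. finite (\<W> n) \<and> \<W> n \<subseteq> \<U> n) \<and>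
      (\<forall>x \<in> topspace X - D. \<forall>\<^sub>F n in sequentially. x \<in> St (\<Union>(\<W> n)) (\<U> n))"
  shows "star_Hurewicz X"
  unfolding star_Hurewicz_def
proof (intro allI impI)
  fix \<U> :: "nat \<Rightarrow> 'a set set"
  assume cover: "\<forall>n. (\<forall>U\<in>\<U> n. openin X U) \<and> topspace X \<subseteq> \<Union>(\<U> n)"
  obtain D \<W> where D: "countable D" and \<W>: "\<forall>n. finite (\<W> n) \<and> \<W> n \<subseteq> \<U> n"
    and outside: "\<forall>x \<in> topspace X - D. \<forall>\<^sub>F n in sequentially. x \<in> St (\<Union>(\<W> n)) (\<U> n)"
    using assms[OF cover] by blast
  define pick where "pick n x = (SOME U. U \<in> \<U> n \<and> x \<in> U)" for n x
  have pick: "pick n x \<in> \<U> n \<and> x \<in> pick n x" if "x \<in> topspace X" for n x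
    unfolding pick_def by (rule someI_ex) (use cover that in blast)
  define E where "E = D \<inter> topspace X"
  define \<V> where "\<V> n = \<W> n \<union> pick n ` {y \<in> E. to_nat_on E y \<le> n}" for n
  have E: "countable E"
    using D by (simp add: E_def)
  have "finite (\<V> n) \<and> \<V> n \<subseteq> \<U> n" for n
    using \<W> pick finite_to_nat_on_le[OF E] by (auto simp: \<V>_def E_def)
  moreover have "\<forall>\<^sub>F n in sequentially. x \<in> St (\<Union>(\<V> n)) (\<U> n)" if x: "x \<in> topspace X" for x
  proof (cases "x \<in> D")
    case True
    then have "x \<in> E"
      using x by (simp add: E_def)
    then have "\<forall>\<^sub>F n in sequentially. pick n x \<in> \<V> n"
      by (rule eventually_mono[OF eventually_to_nat_on_le[OF E]]) (simp add: \<V>_def)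
    then show ?thesis
      by (rule eventually_mono) (use pick[OF x] in \<open>auto intro: StI\<close>)
  next
    case False
    have "St (\<Union>(\<W> n)) (\<U> n) \<subseteq> St (\<Union>(\<V> n)) (\<U> n)" for n
      by (rule St_mono) (auto simp: \<V>_def)
    moreover have "\<forall>\<^sub>F n in sequentially. x \<in> St (\<Union>(\<W> n)) (\<U> n)"
      using outside x False by blast
    ultimately show ?thesis
      by (simp add: eventually_mono subset_eq)
  qed
  ultimately show "\<exists>\<V>. (\<forall>n. finite (\<V> n) \<and> \<V> n \<subseteq> \<U> n) \<and>
      (\<forall>x\<in>topspace X. \<forall>\<^sub>F n in sequentially. x \<in> St (\<Union>(\<V> n)) (\<U> n))"
    by blast
qed

lemma openin_Xbasis: "B \<in> Xbasis \<Longrightarrow> openin Xtop B"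
  unfolding Xtop_def by (rule topology_generated_by_Basis)

lemma openin_Xtop_singleton_Ypt: "openin Xtop {Ypt \<alpha> n}"
  by (rule openin_Xbasis) (auto simp: Xbasis_def)

lemma openin_Xtop_nbhdA: "openin Xtop (nbhdA \<alpha> n)"
  by (rule openin_Xbasis) (auto simp: Xbasis_def)

lemma openin_Xtop_nbhdP: "countable F \<Longrightarrow> openin Xtop (nbhdP F)"
  by (rule openin_Xbasis) (auto simp: Xbasis_def)

lemma topspace_Xtop: "topspace Xtop = UNIV"
proof -
  have "x \<in> topspace Xtop" for x
  proof (cases x)
    case (Ypt \<alpha> n)
    then show ?thesis
      using openin_subset[OF openin_Xtop_singleton_Ypt[of \<alpha> n]] by simp
  next
    case (Apt \<alpha>)
    then show ?thesis
      using openin_subset[OF openin_Xtop_nbhdA[of \<alpha> 0]] by (auto simp: nbhdA_def)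
  next
    case Ppt
    then show ?thesis
      using openin_subset[OF openin_Xtop_nbhdP[of "{}"]] by (auto simp: nbhdP_def)
  qed
  then show ?thesis
    by auto
qed

lemma openin_Xtop_basic_nbhds:
  assumes "openin Xtop U"
  shows "(Apt \<alpha> \<in> U \<longrightarrow> (\<exists>n. nbhdA \<alpha> n \<subseteq> U)) \<and>
         (Ppt \<in> U \<longrightarrow> (\<exists>F. countable F \<and> nbhdP F \<subseteq> U))"
  using assms unfolding Xtop_def openin_topology_generated_by_iff
proof (induction rule: generate_topology_on.induct)
  case (Int U V)
  show ?case
  proof (intro conjI impI)
    assume "Apt \<alpha> \<in> U \<inter> V"
    then obtain m n where "nbhdA \<alpha> m \<subseteq> U" "nbhdA \<alpha> n \<subseteq> V"
      using Int.IH by blast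
    moreover have "nbhdA \<alpha> (max m n) \<subseteq> nbhdA \<alpha> m \<inter> nbhdA \<alpha> n"
      by (auto simp: nbhdA_def)
    ultimately show "\<exists>k. nbhdA \<alpha> k \<subseteq> U \<inter> V"
      by blast
  next
    assume "Ppt \<in> U \<inter> V"
    then obtain F G where "countable F" "nbhdP F \<subseteq> U" "countable G" "nbhdP G \<subseteq> V"
      using Int.IH by blast
    moreover have "nbhdP (F \<union> G) \<subseteq> nbhdP F \<inter> nbhdP G"
      by (auto simp: nbhdP_def)
    ultimately show "\<exists>H. countable H \<and> nbhdP H \<subseteq> U \<inter> V"
      by (meson countable_Un le_inf_iff subset_trans)
  qed
next
  case (UN K)
  then show ?case by blast
next
  case (Basis B)
  then consider \<beta> m where "B = {Ypt \<beta> m}" | \<beta> m where "B = nbhdA \<beta> m"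
    | F where "countable F" "B = nbhdP F"
    unfolding Xbasis_def by blast
  then show ?case
  proof cases
    case 2
    moreover have "Apt \<alpha> \<in> nbhdA \<beta> m \<Longrightarrow> \<alpha> = \<beta>" "Ppt \<notin> nbhdA \<beta> m"
      by (simp_all add: nbhdA_def)
    ultimately show ?thesis by blast
  next
    case 3
    moreover have "Apt \<alpha> \<notin> nbhdP F"
      by (simp add: nbhdP_def)
    ultimately show ?thesis by blast
  qed simp
qed simp

lemma Apt_openin_Xtop_nbhdA:
  "openin Xtop U \<Longrightarrow> Apt \<alpha> \<in> U \<Longrightarrow> \<exists>n. nbhdA \<alpha> n \<subseteq> U"
  using openin_Xtop_basic_nbhds[of U \<alpha>] by simp

lemma Ppt_openin_Xtop_nbhdP:
  "openin Xtop U \<Longrightarrow> Ppt \<in> U \<Longrightarrow> \<exists>F. countable F \<and> nbhdP F \<subseteq> U"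
  using openin_Xtop_basic_nbhds[of U 0] by simp

definition separating_nbhd :: "pt \<Rightarrow> pt \<Rightarrow> pt set" where
  "separating_nbhd x y = (case x of
      Ypt \<alpha> n \<Rightarrow> {Ypt \<alpha> n}
    | Apt \<alpha> \<Rightarrow> nbhdA \<alpha> (case y of Ypt _ m \<Rightarrow> m | _ \<Rightarrow> 0)
    | Ppt \<Rightarrow> nbhdP (case y of Ypt \<beta> _ \<Rightarrow> {\<beta>} | Apt \<beta> \<Rightarrow> {\<beta>} | Ppt \<Rightarrow> {}))"

lemma openin_separating_nbhd: "openin Xtop (separating_nbhd x y)"
  by (cases x; cases y)
     (simp_all add: separating_nbhd_def openin_Xtop_singleton_Ypt openin_Xtop_nbhdA
       openin_Xtop_nbhdP)

lemma mem_separating_nbhd: "x \<in> separating_nbhd x y"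
  by (cases x; cases y) (simp_all add: separating_nbhd_def nbhdA_def nbhdP_def)

lemma disjnt_separating_nbhd:
  "x \<noteq> y \<Longrightarrow> disjnt (separating_nbhd x y) (separating_nbhd y x)"
  by (cases x; cases y) (auto simp: separating_nbhd_def nbhdA_def nbhdP_def disjnt_def)

lemma Hausdorff_space_Xtop: "Hausdorff_space Xtop"
  unfolding Hausdorff_space_def
proof (intro allI impI)
  fix x y
  assume "x \<in> topspace Xtop \<and> y \<in> topspace Xtop \<and> x \<noteq> y"
  then show "\<exists>U V. openin Xtop U \<and> openin Xtop V \<and> x \<in> U \<and> y \<in> V \<and> disjnt U V"
    by (intro exI[of _ "separating_nbhd x y"] exI[of _ "separating_nbhd y x"])
       (simp add: openin_separating_nbhd mem_separating_nbhd disjnt_separating_nbhd)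
qed

lemma star_Hurewicz_Xtop: "star_Hurewicz Xtop"
proof (rule star_Hurewicz_countable_exceptions)
  fix \<U> :: "nat \<Rightarrow> pt set set"
  assume cover: "\<forall>n. (\<forall>U\<in>\<U> n. openin Xtop U) \<and> topspace Xtop \<subseteq> \<Union>(\<U> n)"
  have open_cover: "\<exists>U \<in> \<U> n. openin Xtop U \<and> x \<in> U" for n x
  proof -
    have "topspace Xtop \<subseteq> \<Union>(\<U> n)" "\<forall>U\<in>\<U> n. openin Xtop U"
      using cover by simp_all
    then have "x \<in> \<Union>(\<U> n)" "\<forall>U\<in>\<U> n. openin Xtop U"
      by (simp_all add: topspace_Xtop top.extremum_unique)
    then show ?thesis
      by blast
  qed
  define W where "W n = (SOME U. U \<in> \<U> n \<and> openin Xtop U \<and> Ppt \<in> U)" for n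
  have "W n \<in> \<U> n \<and> openin Xtop (W n) \<and> Ppt \<in> W n" for n
    unfolding W_def by (rule someI_ex) (use open_cover in blast)
  then have W: "\<And>n. W n \<in> \<U> n" "\<And>n. openin Xtop (W n)" "\<And>n. Ppt \<in> W n"
    by simp_all
  define F where "F n = (SOME F. countable F \<and> nbhdP F \<subseteq> W n)" for n
  have "countable (F n) \<and> nbhdP (F n) \<subseteq> W n" for n
    unfolding F_def by (rule someI_ex) (use Ppt_openin_Xtop_nbhdP W in blast)
  then have F: "\<And>n. countable (F n)" "\<And>n. nbhdP (F n) \<subseteq> W n"
    by simp_all
  define G where "G = (\<Union>n. F n)"
  define D where "D = Apt ` G \<union> case_prod Ypt ` (G \<times> UNIV)"
  have "countable D"
    using F(1) by (simp add: D_def G_def)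
  moreover have "x \<in> St (W n) (\<U> n)" if "x \<notin> D" for x n
  proof (cases x)
    case (Ypt \<alpha> m)
    then have "\<alpha> \<notin> F n"
      using that by (auto simp: D_def G_def)
    then have "x \<in> W n"
      using Ypt F(2)[of n] by (auto simp: nbhdP_def)
    then show ?thesis
      using W(1) by (auto intro: StI)
  next
    case (Apt \<alpha>)
    then have "\<alpha> \<notin> F n"
      using that by (auto simp: D_def G_def)
    then have Y_in_W: "Ypt \<alpha> k \<in> W n" for k
      using F(2)[of n] by (auto simp: nbhdP_def)
    obtain U where U: "U \<in> \<U> n" "openin Xtop U" "x \<in> U"
      using open_cover by blast
    then obtain k where "nbhdA \<alpha> k \<subseteq> U"
      using Apt Apt_openin_Xtop_nbhdA by blast
    then have "Ypt \<alpha> (Suc k) \<in> U"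
      by (auto simp: nbhdA_def)
    then show ?thesis
      using U Y_in_W by (auto intro: StI)
  next
    case Ppt
    then show ?thesis
      using W(1,3) by (intro StI[of "W n"]) auto
  qed
  ultimately show "\<exists>D \<W>. countable D \<and> (\<forall>n. finite (\<W> n) \<and> \<W> n \<subseteq> \<U> n) \<and>
      (\<forall>x \<in> topspace Xtop - D. \<forall>\<^sub>F n in sequentially. x \<in> St (\<Union>(\<W> n)) (\<U> n))"
    using W(1) by (intro exI[of _ D] exI[of _ "\<lambda>n. {W n}"]) simp
qed

lemma closedin_range_Apt: "closedin Xtop (range Apt)"
proof -
  have "x \<notin> range Apt \<longleftrightarrow> x \<in> nbhdP {}" for x
    by (cases x) (auto simp: nbhdP_def)
  then have "topspace Xtop - range Apt = nbhdP {}"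
    by (auto simp: topspace_Xtop)
  then show ?thesis
    by (simp add: closedin_def topspace_Xtop openin_Xtop_nbhdP)
qed

lemma not_set_star_Hurewicz_Xtop: "\<not> set_star_Hurewicz Xtop"
proof
  assume star: "set_star_Hurewicz Xtop"
  define \<U> :: "pt set set" where "\<U> = range (\<lambda>\<alpha>. nbhdA \<alpha> 0)"
  have "Xtop closure_of range Apt = range Apt"
    by (rule closure_of_closedin[OF closedin_range_Apt])
  then have "Xtop closure_of range Apt \<subseteq> \<Union>\<U>"
    by (auto simp: \<U>_def nbhdA_def)
  moreover have "\<forall>U \<in> \<U>. openin Xtop U"
    by (auto simp: \<U>_def openin_Xtop_nbhdA)
  ultimately have "range Apt \<noteq> {} \<and> range Apt \<subseteq> topspace Xtop \<and>
      (\<forall>n::nat. (\<forall>U \<in> \<U>. openin Xtop U) \<and> Xtop closure_of range Apt \<subseteq> \<Union>\<U>)"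
    by (simp add: topspace_Xtop)
  from star[unfolded set_star_Hurewicz_def, THEN spec, THEN spec, THEN mp, OF this]
  obtain \<V> where \<V>: "\<And>n. finite (\<V> n) \<and> \<V> n \<subseteq> \<U>"
    and stars: "\<forall>x \<in> range Apt. \<forall>\<^sub>F n in sequentially. x \<in> St (\<Union>(\<V> n)) \<U>"
    by blast
  define E where "E n = {\<alpha>. nbhdA \<alpha> 0 \<in> \<V> n}" for n
  have "inj (\<lambda>\<alpha>. nbhdA \<alpha> 0)"
    by (rule injI) (auto simp: nbhdA_def set_eq_iff)
  then have "finite (E n)" for n
    using \<V> finite_vimageI[of "\<V> n" "\<lambda>\<alpha>. nbhdA \<alpha> 0"] by (simp add: E_def vimage_def)
  then have "countable (\<Union>n. E n)"
    by (simp add: countable_finite)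
  then obtain \<alpha> :: real where \<alpha>: "\<alpha> \<notin> (\<Union>n. E n)"
    using uncountable_UNIV_real by (metis UNIV_I countable_subset subsetI)
  have "pairwise disjnt \<U>"
    by (auto simp: pairwise_def disjnt_def \<U>_def nbhdA_def)
  then have "St (\<Union>(\<V> n)) \<U> \<subseteq> \<Union>(\<V> n)" for n
    using \<V> by (intro St_Union_subset_self) auto
  moreover have "\<forall>\<^sub>F n in sequentially. Apt \<alpha> \<in> St (\<Union>(\<V> n)) \<U>"
    using stars by simp
  then obtain n where "Apt \<alpha> \<in> St (\<Union>(\<V> n)) \<U>"
    unfolding eventually_sequentially by blast
  ultimately have "Apt \<alpha> \<in> \<Union>(\<V> n)"
    by blast
  then have "\<alpha> \<in> E n"
    using \<V> by (auto simp: E_def \<U>_def nbhdA_def)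
  with \<alpha> show False
    by blast
qed

theorem mainTheorem15:
  shows "Hausdorff_space Xtop \<and> star_Hurewicz Xtop \<and> \<not> set_star_Hurewicz Xtop"
  using Hausdorff_space_Xtop star_Hurewicz_Xtop not_set_star_Hurewicz_Xtop by blast

end
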